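(* For every prime power $q\equiv 1\pmod 4$, the signified graph $Tr(SP_q)$ is vertex-transitive, i.e. for any two vertices $x,y$ there is a sign-preserving automorphism of $Tr(SP_q)$ mapping $x$ to $y$.
   Context: A signified graph is a simple graph with each edge labelled positive or negative. Let $q\equiv 1\pmod 4$ be a prime power and $\mathbb{F}_q$ the field of order $q$; for $x\in\mathbb{F}_q^*$ let $\mathrm{sq}(x)=+1$ if $x$ is a square and $-1$ otherwise (note $-1$ is a square). The signified Paley graph $SP_q$ is the complete graph on vertex set $\mathbb{F}_q$ where the edge $xy$ is negative iff $\mathrm{sq}(y-x)=-1$. The Tromp signified Paley graph $Tr(SP_q)$ has vertex set $\{u_i : u\in\mathbb{F}_q\cup\{\infty\},\ i\in\{0,1\}\}$ ($2q+2$ vertices). For $u,v\in\mathbb{F}_q$ and $i,j\in\{0,1\}$ with $u\neq v$, $u_iv_j$ is an edge with sign $\mathrm{sq}(u-v)\cdot(-1)^{i+j}$; for $v\in\mathbb{F}_q$, $\infty_iv_j$ is an edge with sign $(-1)^{i+j}$; there are no other edges (in particular $u_0u_1$ is never an edge). Equivalently, $Tr(SP_q)$ is the anti-twinned graph of $SP_q$ with an added universal vertex $\infty$ joined positively to all vertices. An automorphism of a signified graph is a bijection of its vertex set mapping edges to edges of the same sign and non-edges to non-edges. *)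

theory Defs
  imports Main
begin

definition sq :: "'a::field \<Rightarrow> int" where
  "sq x = (if \<exists>y. y * y = x then 1 else -1)"

text \<open>Vertices of Tr(SP_q): pairs (u, i) with u in F_q plus infinity (None = infinity)
  and i in {0,1}, encoded as bool (False = 0, True = 1).\<close>
type_synonym 'a trvert = "'a option \<times> bool"

text \<open>(-1)^(i+j)\<close>
definition par :: "bool \<Rightarrow> bool \<Rightarrow> int" where
  "par i j = (if i = j then 1 else -1)"

fun tr_edge :: "'a trvert \<Rightarrow> 'a trvert \<Rightarrow> bool" where
  "tr_edge (Some u, i) (Some v, j) = (u \<noteq> v)"
| "tr_edge (None, i) (Some v, j) = True"
| "tr_edge (Some u, i) (None, j) = True"
| "tr_edge (None, i) (None, j) = False"

fun tr_sign :: "'a::field trvert \<Rightarrow> 'a trvert \<Rightarrow> int" where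
  "tr_sign (Some u, i) (Some v, j) = sq (u - v) * par i j"
| "tr_sign (None, i) (Some v, j) = par i j"
| "tr_sign (Some u, i) (None, j) = par i j"
| "tr_sign (None, i) (None, j) = 0"

definition tr_automorphism :: "('a::field trvert \<Rightarrow> 'a trvert) \<Rightarrow> bool" where
  "tr_automorphism f \<longleftrightarrow> bij f \<and>
     (\<forall>x y. tr_edge (f x) (f y) = tr_edge x y) \<and>
     (\<forall>x y. tr_edge x y \<longrightarrow> tr_sign (f x) (f y) = tr_sign x y)"

end

theory Submission
  imports Defs
begin

text \<open>For odd q the nonzero squares have index 2 in the multiplicative group of F_q, so
  sq is multiplicative; for q \<equiv> 1 (mod 4) moreover -1 is a square, so sq (-x) = sq x.
  Then the translations u \<mapsto> u + a, the exchange of the two copies of each vertex, and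
  the involution induced by u \<mapsto> -1/u on F_q \<union> {\<infinity>} (with a layer correction
  at nonsquares) are automorphisms of Tr(SP_q). Together they move every vertex to 0_0.\<close>

abbreviation is_square :: "'a::field \<Rightarrow> bool" where
  "is_square x \<equiv> \<exists>y. y * y = x"

definition nonzero_squares :: "'a::field set" where
  "nonzero_squares = {x. x \<noteq> 0 \<and> is_square x}"

lemma card_even_if_fixpoint_free_involution:
  assumes "finite B" and "\<forall>x\<in>B. g x \<in> B \<and> g x \<noteq> x \<and> g (g x) = x"
  shows "even (card B)"
  using assms
proof (induction B rule: finite_psubset_induct)
  case (psubset B)
  show ?case
  proof (cases "B = {}")
    case False
    then obtain x where x: "x \<in> B" by blast
    let ?B' = "B - {x, g x}"
    have gx: "g x \<in> B" "g x \<noteq> x" "g (g x) = x" using psubset.prems x by auto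
    have "even (card ?B')"
    proof (rule psubset.IH)
      show "?B' \<subset> B" using x by blast
      show "\<forall>y\<in>?B'. g y \<in> ?B' \<and> g y \<noteq> y \<and> g (g y) = y"
      proof
        fix y assume y: "y \<in> ?B'"
        then have gy: "g y \<in> B" "g y \<noteq> y" "g (g y) = y" using psubset.prems by auto
        have "g y \<noteq> x" using y gy(3) by force
        moreover have "g y \<noteq> g x" using y gy(3) gx(3) by force
        ultimately show "g y \<in> ?B' \<and> g y \<noteq> y \<and> g (g y) = y" using gy by simp
      qed
    qed
    moreover have "card B = card ?B' + 2"
    proof -
      have pair: "{x, g x} \<subseteq> B" "card {x, g x} = 2" using x gx by auto
      then have "card {x, g x} \<le> card B" using card_mono[OF psubset.hyps] by blast
      then show ?thesis using pair psubset.hyps by (simp add: card_Diff_subset)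
    qed
    ultimately show ?thesis by simp
  qed simp
qed

lemma two_neq_zero_if_odd_card:
  assumes "odd (card (UNIV :: 'a::{field,finite} set))"
  shows "(2::'a) \<noteq> 0"
proof
  assume "(2::'a) = 0"
  then have "\<forall>x\<in>(UNIV :: 'a set). x + 1 \<in> UNIV \<and> x + 1 \<noteq> x \<and> x + 1 + 1 = x"
    by (simp add: add.assoc one_add_one)
  then have "even (card (UNIV :: 'a set))"
    by (intro card_even_if_fixpoint_free_involution[where g = "\<lambda>x. x + 1"]) simp_all
  then show False using assms by simp
qed

lemma uminus_neq_self_if_odd_card:
  assumes "odd (card (UNIV :: 'a::{field,finite} set))" and "x \<noteq> 0"
  shows "- x \<noteq> (x::'a)"
proof
  assume "- x = x"
  then have "2 * x = 0" by (metis add.inverse_neutral mult_2 neg_eq_iff_add_eq_0)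
  then show False using two_neq_zero_if_odd_card[OF assms(1)] assms(2) by simp
qed

lemma card_nonzero_squares:
  assumes "odd (card (UNIV :: 'a::{field,finite} set))"
  shows "2 * card (nonzero_squares :: 'a set) = card (UNIV :: 'a set) - 1"
proof -
  have fibre: "card {y. y * y = s} = 2" if s: "s \<in> nonzero_squares" for s :: 'a
  proof -
    obtain r where r: "r * r = s" "s \<noteq> 0" using s unfolding nonzero_squares_def by auto
    then have "r \<noteq> 0" by auto
    have "{y. y * y = s} = {r, - r}" using r(1) by (auto simp: square_eq_iff)
    then show ?thesis using uminus_neq_self_if_odd_card[OF assms \<open>r \<noteq> 0\<close>] by simp
  qed
  have "UNIV - {0::'a} = (\<Union>s\<in>nonzero_squares. {y. y * y = s})"
    unfolding nonzero_squares_def by auto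
  then have "card (UNIV - {0::'a}) = card (\<Union>s\<in>nonzero_squares. {y::'a. y * y = s})"
    by simp
  also have "\<dots> = (\<Sum>s\<in>nonzero_squares. card {y::'a. y * y = s})"
    by (rule card_UN_disjoint) auto
  also have "\<dots> = 2 * card (nonzero_squares :: 'a set)" by (simp add: fibre)
  finally show ?thesis by (simp add: card_Diff_singleton)
qed

lemma square_mult_iff_if_square:
  fixes c d :: "'a::field"
  assumes "is_square c" and "c \<noteq> 0"
  shows "is_square (c * d) \<longleftrightarrow> is_square d"
proof -
  obtain r where r: "r * r = c" using assms(1) by blast
  with assms(2) have "r \<noteq> 0" by auto
  show ?thesis
  proof
    assume "is_square (c * d)"
    then obtain w where "w * w = c * d" by blast
    then have "(w / r) * (w / r) = d" using r \<open>r \<noteq> 0\<close> assms(2) by (simp add: field_simps)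
    then show "is_square d" by blast
  next
    assume "is_square d"
    then obtain w where "w * w = d" by blast
    then have "(r * w) * (r * w) = c * d" using r by (simp add: algebra_simps)
    then show "is_square (c * d)" by blast
  qed
qed

text \<open>Multiplying by a nonsquare maps the nonzero squares injectively into the nonsquares;
  both sets have (q - 1)/2 elements, so the image is all of them.\<close>
lemma nonsquare_mult_nonsquare:
  fixes a b :: "'a::{field,finite}"
  assumes "odd (card (UNIV :: 'a set))"
    and "a \<noteq> 0" "\<not> is_square a" and "b \<noteq> 0" "\<not> is_square b"
  shows "is_square (a * b)"
proof -
  let ?N = "(UNIV - {0}) - nonzero_squares :: 'a set"
  have "nonzero_squares \<subseteq> UNIV - {0::'a}" unfolding nonzero_squares_def by auto
  then have card_N: "card ?N = card (nonzero_squares :: 'a set)"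
    using card_nonzero_squares[OF assms(1)] by (simp add: card_Diff_subset card_Diff_singleton)
  have into_N: "(*) a ` nonzero_squares \<subseteq> ?N"
  proof
    fix z assume "z \<in> (*) a ` nonzero_squares"
    then obtain s where s: "z = s * a" "is_square s" "s \<noteq> 0"
      unfolding nonzero_squares_def by (auto simp: mult.commute)
    then have "\<not> is_square z" using square_mult_iff_if_square[OF s(2,3)] assms(3) by simp
    then show "z \<in> ?N" unfolding nonzero_squares_def by auto
  qed
  have "card ((*) a ` nonzero_squares) = card ?N"
    using card_N assms(2) by (simp add: card_image inj_on_def)
  then have "(*) a ` nonzero_squares = ?N" using into_N by (simp add: card_subset_eq)
  moreover have "b \<in> ?N" using assms(4,5) unfolding nonzero_squares_def by auto
  ultimately obtain s where "s \<in> nonzero_squares" "b = a * s" by (metis imageE)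
  then obtain r where "b = a * (r * r)" unfolding nonzero_squares_def by auto
  then have "(a * r) * (a * r) = a * b" by (simp add: algebra_simps)
  then show ?thesis by blast
qed

lemma square_mult_iff:
  fixes a b :: "'a::{field,finite}"
  assumes "odd (card (UNIV :: 'a set))" and "a \<noteq> 0" "b \<noteq> 0"
  shows "is_square (a * b) \<longleftrightarrow> (is_square a \<longleftrightarrow> is_square b)"
  using square_mult_iff_if_square[of a b] square_mult_iff_if_square[of b a]
    nonsquare_mult_nonsquare[OF assms(1,2) _ assms(3)] assms(2,3)
  by (auto simp: mult.commute)

lemma sq_mult:
  fixes a b :: "'a::{field,finite}"
  assumes "odd (card (UNIV :: 'a set))" and "a \<noteq> 0" "b \<noteq> 0"
  shows "sq (a * b) = sq a * sq b"
  using square_mult_iff[OF assms] by (auto simp: sq_def)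

lemma sq_inverse: "sq (inverse (x::'a::field)) = sq x"
proof -
  have "is_square (inverse x) \<longleftrightarrow> is_square x"
    by (metis inverse_inverse_eq inverse_mult_distrib)
  then show ?thesis unfolding sq_def by simp
qed

lemma even_card_nonzero_squares:
  assumes "card (UNIV :: 'a::{field,finite} set) mod 4 = 1"
  shows "even (card (nonzero_squares :: 'a set))"
proof -
  have "odd (card (UNIV :: 'a set))" using assms by presburger
  then have "2 * card (nonzero_squares :: 'a set) = card (UNIV :: 'a set) - 1"
    by (rule card_nonzero_squares)
  then show ?thesis using assms by presburger
qed

text \<open>If -1 were a nonsquare, inversion would be a fixed-point free involution on the
  nonzero squares other than 1, so their number (q - 1)/2 would be odd.\<close>
lemma minus_one_is_square:
  assumes "card (UNIV :: 'a::{field,finite} set) mod 4 = 1"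
  shows "is_square (-1::'a)"
proof (rule ccontr)
  assume nonsquare: "\<not> is_square (-1::'a)"
  have "\<forall>x\<in>nonzero_squares - {1::'a}.
      inverse x \<in> nonzero_squares - {1} \<and> inverse x \<noteq> x \<and> inverse (inverse x) = x"
  proof
    fix x assume "x \<in> nonzero_squares - {1::'a}"
    then obtain y where y: "y * y = x" "x \<noteq> 0" "x \<noteq> 1" unfolding nonzero_squares_def by auto
    then have "inverse y * inverse y = inverse x" by (metis inverse_mult_distrib)
    then have "inverse x \<in> nonzero_squares - {1}" using y unfolding nonzero_squares_def by auto
    moreover have "inverse x \<noteq> x"
    proof
      assume "inverse x = x"
      then have "x * x = 1 * 1" using y(2) by (metis mult_1 right_inverse)
      then have "x = 1 \<or> x = -1" by (simp only: square_eq_iff)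
      then show False using y nonsquare by blast
    qed
    ultimately show "inverse x \<in> nonzero_squares - {1} \<and> inverse x \<noteq> x \<and> inverse (inverse x) = x"
      by simp
  qed
  then have "even (card (nonzero_squares - {1::'a}))"
    by (intro card_even_if_fixpoint_free_involution[where g = inverse]) simp_all
  moreover have "(1::'a) \<in> nonzero_squares" unfolding nonzero_squares_def by (auto intro: exI[of _ 1])
  moreover have "even (card (nonzero_squares :: 'a set))"
    using even_card_nonzero_squares[OF assms] .
  ultimately show False by (simp add: card_Diff_singleton card_gt_0_iff)
qed

lemma sq_uminus:
  assumes "card (UNIV :: 'a::{field,finite} set) mod 4 = 1"
  shows "sq (- x) = sq (x::'a)"
  using square_mult_iff_if_square[OF minus_one_is_square[OF assms], of x] by (simp add: sq_def)

lemma sq_cases: "sq x = 1 \<or> sq x = -1"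
  by (simp add: sq_def)

lemma sq_mult_sq_self: "sq x * (sq x * k) = k"
  by (simp add: sq_def)

lemma tr_automorphism_id: "tr_automorphism id"
  by (simp add: tr_automorphism_def)

lemma tr_automorphism_comp:
  assumes "tr_automorphism f" and "tr_automorphism g"
  shows "tr_automorphism (g \<circ> f)"
proof -
  have "bij f" "\<And>x y. tr_edge (f x) (f y) = tr_edge x y"
    "\<And>x y. tr_edge x y \<Longrightarrow> tr_sign (f x) (f y) = tr_sign x y"
    "bij g" "\<And>x y. tr_edge (g x) (g y) = tr_edge x y"
    "\<And>x y. tr_edge x y \<Longrightarrow> tr_sign (g x) (g y) = tr_sign x y"
    using assms unfolding tr_automorphism_def by auto
  then show ?thesis unfolding tr_automorphism_def by (simp add: bij_comp)
qed

lemma tr_automorphism_inv: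
  assumes "tr_automorphism f"
  shows "tr_automorphism (inv f)"
proof -
  have "bij f" and edge: "\<And>x y. tr_edge (f x) (f y) = tr_edge x y"
    and sign: "\<And>x y. tr_edge x y \<Longrightarrow> tr_sign (f x) (f y) = tr_sign x y"
    using assms unfolding tr_automorphism_def by auto
  then have f_inv: "f (inv f x) = x" for x by (simp add: bij_is_surj surj_f_inv_f)
  show ?thesis unfolding tr_automorphism_def
  proof (intro conjI allI impI)
    show "bij (inv f)" using \<open>bij f\<close> by (rule bij_imp_bij_inv)
    show edge_inv: "tr_edge (inv f x) (inv f y) = tr_edge x y" for x y
      using edge[of "inv f x" "inv f y"] by (simp add: f_inv)
    show "tr_sign (inv f x) (inv f y) = tr_sign x y" if "tr_edge x y" for x y
      using sign[of "inv f x" "inv f y"] that by (simp add: edge_inv f_inv)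
  qed
qed

lemma tr_automorphism_involutionI:
  assumes "\<And>x. f (f x) = x"
    and "\<And>x y. tr_edge (f x) (f y) = tr_edge x y"
    and "\<And>x y. tr_edge x y \<Longrightarrow> tr_sign (f x) (f y) = tr_sign x y"
  shows "tr_automorphism f"
  using assms involuntory_imp_bij[of f] unfolding tr_automorphism_def by blast

lemma trvert_cases: obtains i where "x = (None, i)" | u i where "x = (Some u, i)"
  by (metis option.exhaust prod.exhaust)

fun tr_shift :: "'a::field \<Rightarrow> 'a trvert \<Rightarrow> 'a trvert" where
  "tr_shift a (Some u, i) = (Some (u + a), i)"
| "tr_shift a (None, i) = (None, i)"

fun tr_flip :: "'a trvert \<Rightarrow> 'a trvert" where
  "tr_flip (v, i) = (v, \<not> i)"

text \<open>The map u \<mapsto> -1/u multiplies the sign of an edge u_i v_j by sq u * sq v, since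
  -1/u + 1/v = (u - v)/(u v); moving u_i to the other layer when u is a nonsquare compensates
  for this. On the edges at 0 and \<infinity> it needs sq (- v) = sq v.\<close>
fun tr_inversion :: "'a::field trvert \<Rightarrow> 'a trvert" where
  "tr_inversion (None, i) = (Some 0, i)"
| "tr_inversion (Some u, i) =
     (if u = 0 then (None, i) else (Some (- inverse u), if sq u = 1 then i else \<not> i))"

lemma tr_automorphism_shift: "tr_automorphism (tr_shift a)"
proof -
  have "tr_shift a (tr_shift (- a) x) = x" "tr_shift (- a) (tr_shift a x) = x" for x
    by (cases x rule: trvert_cases; simp)+
  then have "bij (tr_shift a)" by (intro o_bij[of "tr_shift (- a)"]) (auto simp: fun_eq_iff)
  moreover have "tr_edge (tr_shift a x) (tr_shift a y) = tr_edge x y"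
      and "tr_sign (tr_shift a x) (tr_shift a y) = tr_sign x y" for x y
    by (cases x rule: trvert_cases; cases y rule: trvert_cases; simp)+
  ultimately show ?thesis unfolding tr_automorphism_def by simp
qed

lemma par_negate: "par (\<not> i) j = - par i j" "par i (\<not> j) = - par i j"
  by (simp_all add: par_def)

lemma tr_automorphism_flip: "tr_automorphism tr_flip"
proof (rule tr_automorphism_involutionI)
  fix x y :: "'a trvert"
  show "tr_flip (tr_flip x) = x" by (cases x) simp
  show "tr_edge (tr_flip x) (tr_flip y) = tr_edge x y"
    and "tr_sign (tr_flip x) (tr_flip y) = tr_sign x y"
    by (cases x rule: trvert_cases; cases y rule: trvert_cases; simp add: par_negate)+
qed

lemma par_layer:
  "par (if sq u = 1 then i else \<not> i) j = sq u * par i j"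
  "par i (if sq u = 1 then j else \<not> j) = sq u * par i j"
  using sq_cases[of u] by (auto simp: par_negate)

lemma sq_inverse_diff:
  fixes u v :: "'a::{field,finite}"
  assumes "odd (card (UNIV :: 'a set))" and "u \<noteq> 0" "v \<noteq> 0" "u \<noteq> v"
  shows "sq (inverse v - inverse u) = sq (u - v) * (sq u * sq v)"
proof -
  have "inverse v - inverse u = (u - v) * (inverse u * inverse v)"
    using assms(2,3) by (simp add: field_simps)
  also have "sq \<dots> = sq (u - v) * (sq (inverse u) * sq (inverse v))"
    using assms by (simp add: sq_mult)
  finally show ?thesis by (simp add: sq_inverse)
qed

lemma tr_automorphism_inversion:
  assumes "card (UNIV :: 'a::{field,finite} set) mod 4 = 1"
  shows "tr_automorphism (tr_inversion :: 'a trvert \<Rightarrow> 'a trvert)"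
proof (rule tr_automorphism_involutionI)
  have odd: "odd (card (UNIV :: 'a set))" using assms by presburger
  fix x y :: "'a trvert"
  show "tr_inversion (tr_inversion x) = x"
    by (cases x rule: trvert_cases) (auto simp: sq_uminus[OF assms] sq_inverse)
  show "tr_edge (tr_inversion x) (tr_inversion y) = tr_edge x y"
    by (cases x rule: trvert_cases; cases y rule: trvert_cases) auto
  show "tr_sign (tr_inversion x) (tr_inversion y) = tr_sign x y" if "tr_edge x y"
    using that
    by (cases x rule: trvert_cases; cases y rule: trvert_cases)
       (auto simp: par_layer sq_inverse_diff[OF odd] sq_uminus[OF assms] sq_inverse sq_mult_sq_self mult_ac)
qed

lemma tr_automorphism_to_origin:
  assumes "card (UNIV :: 'a::{field,finite} set) mod 4 = 1"
  shows "\<exists>f. tr_automorphism f \<and> f x = (Some (0::'a), False)"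
proof -
  have flip_if: "tr_automorphism (if b then tr_flip else id)" for b
    by (simp add: tr_automorphism_flip tr_automorphism_id)
  show ?thesis
  proof (cases x rule: trvert_cases)
    case (1 i)
    then have "(tr_inversion \<circ> (if i then tr_flip else id)) x = (Some 0, False)" by simp
    then show ?thesis
      using tr_automorphism_comp[OF flip_if tr_automorphism_inversion[OF assms]] by blast
  next
    case (2 u i)
    then have "((if i then tr_flip else id) \<circ> tr_shift (- u)) x = (Some 0, False)" by simp
    then show ?thesis using tr_automorphism_comp[OF tr_automorphism_shift flip_if] by blast
  qed
qed

theorem mainTheorem5:
  fixes x y :: "('a::{field,finite}) trvert"
  assumes "card (UNIV :: 'a set) mod 4 = 1"
  shows "\<exists>f. tr_automorphism f \<and> f x = y"
proof -
  obtain f where f: "tr_automorphism f" "f x = (Some 0, False)"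
    using tr_automorphism_to_origin[OF assms] by blast
  obtain g where g: "tr_automorphism g" "g y = (Some 0, False)"
    using tr_automorphism_to_origin[OF assms] by blast
  have "tr_automorphism (inv g \<circ> f)"
    using tr_automorphism_comp[OF f(1) tr_automorphism_inv[OF g(1)]] .
  moreover have "(inv g \<circ> f) x = y"
    using f(2) g by (simp add: tr_automorphism_def bij_is_inj inv_f_eq)
  ultimately show ?thesis by blast
qed

end
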